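(* Let $K$ be a number field with ring of integers $R$, let $0\ne a\in R$, and let $D$ be either $R[1/a]\{t\}$ or $R[1/a][[t]]$. Then the localization of $D$ at the multiplicative set $R\{t\}\setminus\{0\}$ is a field; equivalently, for every $g\in D$ there exists $0\ne h\in D$ with $gh\in R\{t\}$.
   Context: For $x\in K$ put $\|x\|=\max_{\sigma\in\operatorname{Hom}(K,\mathbb{C})}|\sigma(x)|$, and for a subring $S\subseteq K$ let $S\{t\}=\{\sum_{n\ge0}a_nt^n\in S[[t]]:\limsup_n\|a_n\|^{1/n}\le1\}$. All rings are viewed inside $K[[t]]$. *)

theory Defs
  imports "HOL-Analysis.Analysis" "HOL-Computational_Algebra.Computational_Algebra"
begin

text \<open>A number field, realised (without loss of generality) as a subfield of the
complex numbers that is finite-dimensional over the rationals.\<close>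
definition number_field :: "complex set \<Rightarrow> bool" where
  "number_field K \<longleftrightarrow>
     0 \<in> K \<and> 1 \<in> K \<and>
     (\<forall>x\<in>K. \<forall>y\<in>K. x + y \<in> K \<and> x * y \<in> K \<and> - x \<in> K) \<and>
     (\<forall>x\<in>K. x \<noteq> 0 \<longrightarrow> inverse x \<in> K) \<and>
     (\<exists>B. finite B \<and> B \<subseteq> K \<and>
        (\<forall>x\<in>K. \<exists>c :: complex \<Rightarrow> rat. x = (\<Sum>b\<in>B. of_rat (c b) * b)))"

text \<open>Hom(K, C): ring homomorphisms from K into C, represented extensionally
(value 0 outside K) so that they form a finite set.\<close>
definition embeddings :: "complex set \<Rightarrow> (complex \<Rightarrow> complex) set" where
  "embeddings K = {\<sigma>.
     (\<forall>x\<in>K. \<forall>y\<in>K. \<sigma> (x + y) = \<sigma> x + \<sigma> y \<and> \<sigma> (x * y) = \<sigma> x * \<sigma> y) \<and>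
     \<sigma> 1 = 1 \<and> (\<forall>x. x \<notin> K \<longrightarrow> \<sigma> x = 0)}"

definition house :: "complex set \<Rightarrow> complex \<Rightarrow> real" where
  "house K x = Max ((\<lambda>\<sigma>. cmod (\<sigma> x)) ` embeddings K)"

definition ring_of_integers :: "complex set \<Rightarrow> complex set" where
  "ring_of_integers K = {x \<in> K. algebraic_int x}"

definition invert_elem :: "complex set \<Rightarrow> complex \<Rightarrow> complex set" where
  "invert_elem R a = {r / a ^ k | r k. r \<in> R}"

definition fps_over :: "complex set \<Rightarrow> complex fps set" where
  "fps_over S = {f. \<forall>n. fps_nth f n \<in> S}"

definition conv_fps :: "complex set \<Rightarrow> complex set \<Rightarrow> complex fps set" where
  "conv_fps K S = {f \<in> fps_over S.
      limsup (\<lambda>n. ereal (root n (house K (fps_nth f n)))) \<le> 1}"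

end

theory Submission
  imports Defs "Jordan_Normal_Form.Char_Poly"
begin

(* Write g = b t^m + (higher terms) with b \<noteq> 0 in R[1/a].  The coefficients of h are found one
   by one: if h_0, ..., h_{n-1} are known, the coefficient of t^(m+n) in g*h is b h_n + s_n with
   s_n in R[1/a] determined by the earlier h_j.  The arithmetic heart is a "correction lemma":
   for every s in R[1/a] and every target w in K there is c in R with (c - s)/b in R[1/a] and
   all conjugates of c - w bounded by a constant C_0 depending only on b.  Taking h_n = (c - s_n)/b
   makes the coefficient of g*h equal to c, which lies in R.  For D = R[1/a][[t]] we take w = 0,
   so g*h has bounded coefficients; for D = R[1/a]{t} we take w = s_n, so h has bounded
   coefficients and those of g*h grow subexponentially. *)

section \<open>Algebraic integers\<close>

text \<open>A complex number that maps a finitely generated, nonzero \<open>\<int>\<close>-module into itself is an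
  algebraic integer: it is an eigenvalue of an integer matrix, hence a root of the monic
  characteristic polynomial.  This is the standard route to closure under \<open>+\<close> and \<open>*\<close>.\<close>

definition int_span :: "complex set \<Rightarrow> complex set" where
  "int_span F = {u. \<exists>c. u = (\<Sum>w\<in>F. of_int (c w) * w)}"

lemma int_span_0: "0 \<in> int_span F"
  unfolding int_span_def by (rule CollectI, rule exI[of _ "\<lambda>_. 0"]) simp

lemma int_span_add: "u \<in> int_span F \<Longrightarrow> v \<in> int_span F \<Longrightarrow> u + v \<in> int_span F"
proof -
  assume "u \<in> int_span F" "v \<in> int_span F"
  then obtain c1 c2 where "u = (\<Sum>w\<in>F. of_int (c1 w) * w)" "v = (\<Sum>w\<in>F. of_int (c2 w) * w)"
    by (auto simp: int_span_def)
  hence "u + v = (\<Sum>w\<in>F. of_int (c1 w + c2 w) * w)" by (simp add: sum.distrib distrib_right)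
  thus ?thesis unfolding int_span_def by (intro CollectI exI[of _ "\<lambda>w. c1 w + c2 w"])
qed

lemma int_span_smult: "u \<in> int_span F \<Longrightarrow> of_int k * u \<in> int_span F"
proof -
  assume "u \<in> int_span F"
  then obtain c where "u = (\<Sum>w\<in>F. of_int (c w) * w)" by (auto simp: int_span_def)
  hence "of_int k * u = (\<Sum>w\<in>F. of_int (k * c w) * w)" by (simp add: sum_distrib_left mult.assoc)
  thus ?thesis unfolding int_span_def by (intro CollectI exI[of _ "\<lambda>w. k * c w"])
qed

lemma int_span_sum:
  "(\<And>i. i \<in> I \<Longrightarrow> u i \<in> int_span F) \<Longrightarrow> (\<Sum>i\<in>I. u i) \<in> int_span F"
  by (induction I rule: infinite_finite_induct) (auto intro: int_span_add int_span_0)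

lemma int_span_base: "finite F \<Longrightarrow> f \<in> F \<Longrightarrow> f \<in> int_span F"
  unfolding int_span_def
proof (rule CollectI, rule exI[of _ "\<lambda>w. if w = f then 1 else 0"])
  assume "finite F" "f \<in> F"
  have "(\<Sum>w\<in>F. of_int (if w = f then 1 else 0) * w) = (\<Sum>w\<in>F. if w = f then w else 0)"
    by (rule sum.cong) auto
  also have "\<dots> = f" using \<open>finite F\<close> \<open>f \<in> F\<close> by (simp add: sum.delta)
  finally show "f = (\<Sum>w\<in>F. of_int (if w = f then 1 else 0) * w)" by simp
qed

lemma int_span_mult_closed:
  assumes "\<forall>f\<in>F. x * f \<in> int_span F" "u \<in> int_span F"
  shows "x * u \<in> int_span F"
proof -
  from assms(2) obtain c where u: "u = (\<Sum>w\<in>F. of_int (c w) * w)" by (auto simp: int_span_def)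
  have "x * u = (\<Sum>w\<in>F. of_int (c w) * (x * w))" by (simp add: u sum_distrib_left mult_ac)
  also have "\<dots> \<in> int_span F" using assms by (intro int_span_sum int_span_smult) auto
  finally show ?thesis .
qed

lemma algebraic_int_if_stabilises_int_span:
  fixes z :: complex
  assumes fin: "finite F" and nz: "\<exists>f\<in>F. f \<noteq> 0" and stable: "\<forall>f\<in>F. z * f \<in> int_span F"
  shows "algebraic_int z"
proof -
  define n where "n = card F"
  obtain e where e: "bij_betw e {0..<n} F" using ex_bij_betw_nat_finite[OF fin] n_def by blast
  define c where "c = (\<lambda>f. SOME c::complex\<Rightarrow>int. z * f = (\<Sum>w\<in>F. of_int (c w) * w))"
  have c: "z * f = (\<Sum>w\<in>F. of_int (c f w) * w)" if "f \<in> F" for f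
    using someI_ex[of "\<lambda>c. z * f = (\<Sum>w\<in>F. of_int (c w) * w)"] stable that
    unfolding c_def int_span_def by blast
  define Ci where "Ci = mat n n (\<lambda>(i,j). c (e i) (e j))"
  define A :: "complex mat" where "A = map_mat of_int Ci"
  define v where "v = vec n e"
  have Ci: "Ci \<in> carrier_mat n n" by (simp add: Ci_def)
  have A: "A \<in> carrier_mat n n" by (simp add: A_def Ci_def)
  have "A *\<^sub>v v = z \<cdot>\<^sub>v v"
  proof (rule eq_vecI)
    fix i assume "i < dim_vec (z \<cdot>\<^sub>v v)"
    hence i: "i < n" by (simp add: v_def)
    have "(A *\<^sub>v v) $ i = (\<Sum>j\<in>{0..<n}. of_int (c (e i) (e j)) * e j)"
      using i by (simp add: A_def Ci_def v_def scalar_prod_def)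
    also have "\<dots> = (\<Sum>w\<in>F. of_int (c (e i) w) * w)"
      using sum.reindex_bij_betw[OF e, of "\<lambda>w. of_int (c (e i) w) * w"] by simp
    also have "\<dots> = z * e i" using c[of "e i"] e i by (auto simp: bij_betw_def)
    finally show "(A *\<^sub>v v) $ i = (z \<cdot>\<^sub>v v) $ i" using i by (simp add: v_def)
  qed (simp add: A_def Ci_def v_def)
  moreover have "v \<noteq> 0\<^sub>v n"
  proof -
    obtain f where f: "f \<in> F" "f \<noteq> 0" using nz by blast
    then obtain i where i: "i < n" "e i = f" using e by (auto simp: bij_betw_def)
    hence "v $ i \<noteq> 0\<^sub>v n $ i" using f by (simp add: v_def)
    thus ?thesis by metis
  qed
  ultimately have "eigenvector A v z" using A by (simp add: eigenvector_def v_def)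
  hence "poly (char_poly A) z = 0" using eigenvalue_root_char_poly[OF A] eigenvalue_def by blast
  moreover have "char_poly A = map_poly of_int (char_poly Ci)"
    unfolding A_def by (rule of_int_hom.char_poly_hom[OF Ci])
  moreover have "lead_coeff (char_poly Ci) = 1" using degree_monic_char_poly[OF Ci] by simp
  ultimately show ?thesis unfolding algebraic_int_altdef_ipoly by metis
qed

lemma monic_root_top_power:
  fixes x :: complex and p :: "int poly"
  assumes "lead_coeff p = 1" "poly (map_poly of_int p) x = 0"
  shows "x ^ degree p = (\<Sum>l<degree p. of_int (- coeff p l) * x ^ l)"
proof -
  have "0 = (\<Sum>l\<le>degree p. of_int (coeff p l) * x ^ l)"
    using assms(2) by (simp add: poly_altdef degree_map_poly coeff_map_poly)
  also have "\<dots> = (\<Sum>l<degree p. of_int (coeff p l) * x ^ l) + x ^ degree p"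
    using assms(1) by (simp add: lessThan_Suc_atMost[symmetric])
  finally show ?thesis by (simp add: sum_negf eq_neg_iff_add_eq_0 add.commute)
qed

lemma monic_root_degree_pos:
  fixes x :: complex and p :: "int poly"
  assumes "lead_coeff p = 1" "poly (map_poly of_int p) x = 0"
  shows "degree p > 0"
proof (rule ccontr)
  assume "\<not> degree p > 0"
  then obtain c where "p = [:c:]" by (metis degree_eq_zeroE gr0I)
  hence "p = [:1:]" using assms(1) by simp
  thus False using assms(2) by simp
qed

text \<open>If \<open>x\<close> is a root of a monic integer polynomial of degree \<open>d\<close>, every power of \<open>x\<close> lies in any
  \<open>\<int>\<close>-module-like class containing \<open>1, x, \<dots>, x^(d-1)\<close>; the class is given by a predicate so
  that it can also be applied to products \<open>x^i * y^j\<close>.\<close>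

lemma powers_of_algebraic_int:
  fixes x :: complex and p :: "int poly"
  assumes "lead_coeff p = 1" "poly (map_poly of_int p) x = 0"
    and low: "\<And>i. i < degree p \<Longrightarrow> Q (x ^ i)"
    and add: "\<And>u v. Q u \<Longrightarrow> Q v \<Longrightarrow> Q (u + v)" and smult: "\<And>u k. Q u \<Longrightarrow> Q (of_int k * u)"
    and zero: "Q 0"
  shows "Q (x ^ i)"
proof (induction i rule: less_induct)
  case (less i)
  define d where "d = degree p"
  have d: "d > 0" using monic_root_degree_pos[OF assms(1,2)] by (simp add: d_def)
  have sum: "Q (\<Sum>l\<in>L. of_int (f l) * x ^ g l)" if "\<And>l. l \<in> L \<Longrightarrow> Q (x ^ g l)" for L f g
    using that by (induction L rule: infinite_finite_induct) (auto intro: add smult zero)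
  show ?case
  proof (cases "i < d")
    case True thus ?thesis using low by (simp add: d_def)
  next
    case False
    have "x ^ i = x ^ (i - d) * x ^ d" using False by (simp flip: power_add)
    also have "\<dots> = (\<Sum>l<d. of_int (- coeff p l) * x ^ (i - d + l))"
      using monic_root_top_power[OF assms(1,2)]
      by (simp add: d_def sum_distrib_left power_add mult_ac)
    also have "Q \<dots>" using False d by (intro sum less) auto
    finally show ?thesis .
  qed
qed

text \<open>Algebraic integers form a ring: all products \<open>x^i y^j\<close> lie in the \<open>\<int>\<close>-module spanned by
  the finitely many products with \<open>i, j\<close> below the degrees, which \<open>x + y\<close> and \<open>x y\<close> stabilise.\<close>

lemma algebraic_int_add_mult:
  fixes x y :: complex
  assumes "algebraic_int x" "algebraic_int y"
  shows "algebraic_int (x + y)" "algebraic_int (x * y)"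
proof -
  obtain p :: "int poly" where p: "lead_coeff p = 1" "poly (map_poly of_int p) x = 0"
    using assms(1) unfolding algebraic_int_altdef_ipoly by blast
  obtain q :: "int poly" where q: "lead_coeff q = 1" "poly (map_poly of_int q) y = 0"
    using assms(2) unfolding algebraic_int_altdef_ipoly by blast
  define F where "F = (\<lambda>(i,j). x ^ i * y ^ j) ` ({..<degree p} \<times> {..<degree q})"
  have fin: "finite F" by (simp add: F_def)
  have nz: "\<exists>f\<in>F. f \<noteq> 0"
    using monic_root_degree_pos[OF p] monic_root_degree_pos[OF q]
    by (intro bexI[of _ 1]) (auto simp: F_def intro!: image_eqI[of _ _ "(0,0)"])
  have in_x: "x ^ i * y ^ j \<in> int_span F" if "j < degree q" for i j
  proof (rule powers_of_algebraic_int[OF p, where Q = "\<lambda>u. u * y ^ j \<in> int_span F"])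
    show "x ^ k * y ^ j \<in> int_span F" if "k < degree p" for k
      using that \<open>j < degree q\<close> by (intro int_span_base[OF fin]) (auto simp: F_def)
  qed (auto simp: distrib_right mult.assoc int_span_0 intro: int_span_add int_span_smult)
  have in_xy: "x ^ i * y ^ j \<in> int_span F" for i j
    by (rule powers_of_algebraic_int[OF q, where Q = "\<lambda>u. x ^ i * u \<in> int_span F"])
      (auto simp: distrib_left mult.left_commute int_span_0 in_x intro: int_span_add int_span_smult)
  have X: "\<forall>f\<in>F. x * f \<in> int_span F" and Y: "\<forall>f\<in>F. y * f \<in> int_span F"
    using in_xy[of "Suc _"] in_xy[of _ "Suc _"] by (auto simp: F_def mult_ac)
  show "algebraic_int (x + y)"
    using X Y by (intro algebraic_int_if_stabilises_int_span[OF fin nz])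
      (auto simp: distrib_right intro: int_span_add)
  show "algebraic_int (x * y)"
    using X Y by (intro algebraic_int_if_stabilises_int_span[OF fin nz])
      (auto simp: mult.assoc intro: int_span_mult_closed)
qed

lemma algebraic_int_sum:
  "(\<And>i. i \<in> I \<Longrightarrow> algebraic_int (f i :: complex)) \<Longrightarrow> algebraic_int (sum f I)"
  by (induction I rule: infinite_finite_induct) (auto intro: algebraic_int_add_mult)

lemma algebraic_int_power: "algebraic_int (x :: complex) \<Longrightarrow> algebraic_int (x ^ n)"
  by (induction n) (auto intro: algebraic_int_add_mult)

text \<open>If \<open>z^d\<close> is an integral combination of \<open>1, z, \<dots>, z^(d-1)\<close>, then \<open>z\<close> is an algebraic integer
  (the span of these powers is stable under multiplication by \<open>z\<close>).\<close>

lemma algebraic_int_if_top_power_in_span: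
  fixes z :: complex
  assumes d: "d > 0" and top: "z ^ d \<in> int_span ((\<lambda>i. z ^ i) ` {..<d})"
  shows "algebraic_int z"
proof (rule algebraic_int_if_stabilises_int_span)
  define F where "F = (\<lambda>i. z ^ i) ` {..<d}"
  show "finite F" by (simp add: F_def)
  show "\<exists>f\<in>F. f \<noteq> 0"
    using d by (intro bexI[of _ 1]) (auto simp: F_def intro: image_eqI[of _ _ 0])
  show "\<forall>f\<in>F. z * f \<in> int_span F"
  proof
    fix f assume "f \<in> F"
    then obtain i where i: "i < d" "z * f = z ^ Suc i" by (auto simp: F_def)
    show "z * f \<in> int_span F"
    proof (cases "Suc i < d")
      case True
      hence "z ^ Suc i \<in> F" unfolding F_def by blast
      thus ?thesis using i(2) \<open>finite F\<close> by (metis int_span_base)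
    next
      case False
      hence "Suc i = d" using i(1) by simp
      thus ?thesis using i(2) top by (simp add: F_def)
    qed
  qed
qed

text \<open>Every algebraic number has a positive integer multiple that is an algebraic integer:
  if \<open>p(x) = 0\<close> with leading coefficient \<open>l\<close>, then \<open>l x\<close> satisfies a monic integer equation.\<close>

lemma algebraic_int_multiple:
  fixes x :: complex
  assumes "algebraic x"
  shows "\<exists>m::int. m > 0 \<and> algebraic_int (of_int m * x)"
proof -
  obtain p :: "int poly" where p: "p \<noteq> 0" "poly (map_poly of_int p) x = 0"
    using assms by (rule algebraicE')
  define l where "l = lead_coeff p"
  define d where "d = degree p"
  have l: "l \<noteq> 0" using p by (simp add: l_def)
  have root: "(\<Sum>i\<le>d. of_int (coeff p i) * x ^ i) = 0"
    using p(2) by (simp add: poly_altdef degree_map_poly coeff_map_poly d_def)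
  have d: "d > 0"
  proof (rule ccontr)
    assume "\<not> d > 0"
    hence "of_int l = (0::complex)" using root by (simp add: l_def d_def)
    thus False using l by simp
  qed
  have top: "of_int l * x ^ d = - (\<Sum>i<d. of_int (coeff p i) * x ^ i)"
    using root
    by (simp add: lessThan_Suc_atMost[symmetric] l_def d_def eq_neg_iff_add_eq_0 add.commute)
  define z where "z = of_int l * x"
  have z_top: "z ^ d = (\<Sum>i<d. of_int (- (coeff p i * l ^ (d - 1 - i))) * z ^ i)"
  proof -
    have scaled: "of_int l ^ (d - 1) * (of_int (coeff p i) * x ^ i)
        = of_int (coeff p i * l ^ (d - 1 - i)) * z ^ i" if "i < d" for i
    proof -
      have "(of_int l :: complex) ^ (d - 1) = of_int l ^ (d - 1 - i) * of_int l ^ i"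
        using that by (simp flip: power_add)
      thus ?thesis by (simp add: z_def power_mult_distrib mult_ac)
    qed
    have "z ^ d = of_int l ^ (d - 1) * (of_int l * x ^ d)"
      using d by (simp add: z_def power_mult_distrib mult_ac flip: power_Suc)
    also have "\<dots> = - (\<Sum>i<d. of_int l ^ (d - 1) * (of_int (coeff p i) * x ^ i))"
      by (simp add: top sum_distrib_left)
    also have "(\<Sum>i<d. of_int l ^ (d - 1) * (of_int (coeff p i) * x ^ i))
        = (\<Sum>i<d. of_int (coeff p i * l ^ (d - 1 - i)) * z ^ i)"
      by (intro sum.cong refl scaled) simp
    also have "- \<dots> = (\<Sum>i<d. of_int (- (coeff p i * l ^ (d - 1 - i))) * z ^ i)"
      by (simp add: sum_negf)
    finally show ?thesis .
  qed
  have "z ^ d \<in> int_span ((\<lambda>i. z ^ i) ` {..<d})"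
    unfolding z_top by (intro int_span_sum int_span_smult int_span_base) auto
  hence "algebraic_int z" using d by (intro algebraic_int_if_top_power_in_span)
  hence "algebraic_int (of_int \<bar>l\<bar> * x)" by (cases "l \<ge> 0") (auto simp: z_def)
  thus ?thesis using l by (intro exI[of _ "\<bar>l\<bar>"]) auto
qed

text \<open>A nonzero algebraic integer \<open>r\<close> divides some positive rational integer \<open>N\<close> in the ring of
  algebraic integers: divide the monic equation of \<open>r\<close> by its lowest nonvanishing power.\<close>

lemma algebraic_int_divides_integer:
  fixes r :: complex
  assumes r: "algebraic_int r" "r \<noteq> 0"
  shows "\<exists>N::int. N > 0 \<and> algebraic_int (of_int N / r)"
proof -
  obtain p :: "int poly" where p: "poly (map_poly of_int p) r = 0" "lead_coeff p = 1"
    using r unfolding algebraic_int_altdef_ipoly by blast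
  define D where "D = degree p"
  define k where "k = (LEAST i. coeff p i \<noteq> 0)"
  have pk: "coeff p k \<noteq> 0" unfolding k_def by (rule LeastI[of _ D]) (use p in \<open>simp add: D_def\<close>)
  have kD: "k \<le> D" unfolding k_def by (rule Least_le) (use p in \<open>simp add: D_def\<close>)
  have below: "coeff p i = 0" if "i < k" for i using not_less_Least[OF that[unfolded k_def]] by simp
  define Y where "Y = (\<Sum>i\<in>{k<..D}. of_int (coeff p i) * r ^ (i - k - 1))"
  have "0 = (\<Sum>i\<le>D. of_int (coeff p i) * r ^ i)"
    using p(1) by (simp add: poly_altdef degree_map_poly coeff_map_poly D_def)
  also have "{..D} = {..<k} \<union> ({k} \<union> {k<..D})" using kD by auto
  also have "(\<Sum>i\<in>{..<k} \<union> ({k} \<union> {k<..D}). of_int (coeff p i) * r ^ i) =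
      (\<Sum>i\<in>{..<k}. of_int (coeff p i) * r ^ i) + (of_int (coeff p k) * r ^ k +
       (\<Sum>i\<in>{k<..D}. of_int (coeff p i) * r ^ i))"
    by (subst sum.union_disjoint, simp, simp, force, subst sum.union_disjoint) auto
  also have "(\<Sum>i\<in>{..<k}. of_int (coeff p i) * r ^ i) = 0" using below by simp
  also have "(\<Sum>i\<in>{k<..D}. of_int (coeff p i) * r ^ i) = r ^ k * (r * Y)"
    unfolding Y_def sum_distrib_left
    by (intro sum.cong refl) (auto simp: mult_ac simp flip: power_add power_Suc)
  finally have "r ^ k * (of_int (coeff p k) + r * Y) = 0" by (simp add: algebra_simps)
  hence "of_int (coeff p k) + r * Y = 0" using r(2) by simp
  hence quotient: "of_int (coeff p k) / r = - Y" using r(2) by (simp add: field_simps add_eq_0_iff2)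
  have "algebraic_int Y"
    unfolding Y_def using r(1) by (intro algebraic_int_sum algebraic_int_add_mult algebraic_int_power) auto
  hence "algebraic_int (of_int \<bar>coeff p k\<bar> / r)"
    using quotient by (cases "coeff p k \<ge> 0") (auto simp: minus_divide_left)
  thus ?thesis using pk by (intro exI[of _ "\<bar>coeff p k\<bar>"]) auto
qed

text \<open>Two distinct powers of an algebraic integer are congruent modulo any \<open>N > 0\<close>: the powers
  lie in the \<open>\<int>\<close>-module spanned by \<open>1, \<dots>, a^(d-1)\<close>, and their coordinates mod \<open>N\<close> take only
  finitely many values.\<close>

lemma algebraic_int_powers_congruent:
  fixes a :: complex and N :: int
  assumes a: "algebraic_int a" and N: "N > 0"
  shows "\<exists>i i'. i < i' \<and> algebraic_int ((a ^ i - a ^ i') / of_int N)"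
proof -
  obtain P :: "int poly" where P: "lead_coeff P = 1" "poly (map_poly of_int P) a = 0"
    using a unfolding algebraic_int_altdef_ipoly by blast
  define F where "F = (\<lambda>j. a ^ j) ` {..<degree P}"
  have fin: "finite F" by (simp add: F_def)
  have "a ^ i \<in> int_span F" for i
    by (rule powers_of_algebraic_int[OF P])
      (auto simp: F_def int_span_0 intro: int_span_base int_span_add int_span_smult)
  hence "\<exists>c. a ^ i = (\<Sum>w\<in>F. of_int (c w) * w)" for i by (simp add: int_span_def)
  then obtain c where c: "\<And>i. a ^ i = (\<Sum>w\<in>F. of_int (c i w) * w)" by metis
  define res where "res = (\<lambda>i. restrict (\<lambda>w. c i w mod N) F)"
  have "range res \<subseteq> PiE F (\<lambda>_. {0..<N})"
    using N by (auto simp: res_def)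
  hence "finite (range res)" using fin by (rule finite_subset[OF _ finite_PiE]) auto
  hence "\<not> inj res" using finite_imageD infinite_UNIV_nat by blast
  then obtain i i' where ii: "i < i'" "res i = res i'"
    by (metis injI linorder_neqE_nat)
  define w where "w = (\<lambda>f. (c i f - c i' f) div N)"
  have w: "of_int (c i f) - of_int (c i' f) = of_int N * (of_int (w f) :: complex)" if "f \<in> F" for f
  proof -
    have "c i f mod N = c i' f mod N" using fun_cong[OF ii(2), of f] that by (simp add: res_def)
    hence "N dvd c i f - c i' f" by (simp add: mod_eq_dvd_iff)
    thus ?thesis by (simp add: w_def flip: of_int_mult of_int_diff)
  qed
  have "a ^ i - a ^ i' = (\<Sum>f\<in>F. of_int (c i f - c i' f) * f)"
    by (simp only: c[of i] c[of i']) (simp add: sum_subtractf algebra_simps)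
  also have "\<dots> = of_int N * (\<Sum>f\<in>F. of_int (w f) * f)"
    unfolding sum_distrib_left by (intro sum.cong refl) (simp add: w mult.assoc)
  finally have "(a ^ i - a ^ i') / of_int N = (\<Sum>f\<in>F. of_int (w f) * f)"
    using N by simp
  moreover have "algebraic_int f" if "f \<in> F" for f
    using that a by (auto simp: F_def intro: algebraic_int_power)
  ultimately have "algebraic_int ((a ^ i - a ^ i') / of_int N)"
    by (auto intro!: algebraic_int_sum algebraic_int_add_mult)
  thus ?thesis using ii(1) by blast
qed

lemma algebraic_int_powers_periodic:
  fixes a :: complex and N :: int
  assumes a: "algebraic_int a" and N: "N > 0"
  shows "\<exists>i p. p > 0 \<and> (\<forall>k. algebraic_int (a ^ i * (1 - a ^ (p * k)) / of_int N))"
proof -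
  obtain i i' where ii: "i < i'" "algebraic_int ((a ^ i - a ^ i') / of_int N)"
    using algebraic_int_powers_congruent[OF a N] by blast
  define p where "p = i' - i"
  have step: "a ^ i * (1 - a ^ p) / of_int N = (a ^ i - a ^ i') / of_int N"
    using ii(1) by (simp add: p_def algebra_simps flip: power_add)
  have "algebraic_int (a ^ i * (1 - a ^ (p * k)) / of_int N)" for k
  proof (induction k)
    case (Suc k)
    have split: "a ^ i * (1 - a ^ (p * Suc k)) / of_int N
        = a ^ i * (1 - a ^ (p * k)) / of_int N + a ^ (p * k) * (a ^ i * (1 - a ^ p) / of_int N)"
      using N by (simp add: field_simps power_add)
    show ?case unfolding split step by (intro algebraic_int_add_mult algebraic_int_power Suc ii(2) a)
  qed simp
  moreover have "p > 0" using ii(1) by (simp add: p_def)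
  ultimately show ?thesis by blast
qed

lemma cmod_of_rat: "cmod (of_rat q) = \<bar>of_rat q :: real\<bar>"
proof -
  obtain m n where "q = Rat.Fract m n" "n > 0" by (cases q) auto
  thus ?thesis by (simp add: of_rat_rat norm_divide)
qed

interpretation rat_vs: vector_space "\<lambda>(q::rat) (x::complex). of_rat q * x"
  by unfold_locales (auto simp: distrib_left distrib_right of_rat_add of_rat_mult mult.assoc)

lemma algebraic_if_powers_dependent:
  fixes x :: complex
  assumes inj: "inj_on (\<lambda>i. x ^ i) {..n}" and dep: "rat_vs.dependent ((\<lambda>i. x ^ i) ` {..n})"
  shows "algebraic x"
proof -
  define S where "S = (\<lambda>i. x ^ i) ` {..n}"
  obtain u where u: "\<exists>v\<in>S. u v \<noteq> 0" "(\<Sum>v\<in>S. of_rat (u v) * v) = 0"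
    using dep rat_vs.dependent_finite[of S] by (auto simp: S_def)
  define p where "p = (\<Sum>i\<le>n. monom (of_rat (u (x ^ i)) :: complex) i)"
  have cp: "coeff p j = (if j \<le> n then of_rat (u (x ^ j)) else 0)" for j
    by (simp add: p_def coeff_sum coeff_monom)
  have "poly p x = (\<Sum>i\<le>n. of_rat (u (x ^ i)) * x ^ i)" by (simp add: p_def poly_sum poly_monom)
  also have "\<dots> = (\<Sum>v\<in>S. of_rat (u v) * v)"
    unfolding S_def by (subst sum.reindex[OF inj]) simp
  finally have "poly p x = 0" using u(2) by simp
  moreover have "p \<noteq> 0"
  proof
    assume "p = 0"
    from u(1) obtain i where "i \<le> n" "u (x ^ i) \<noteq> 0" by (auto simp: S_def)
    hence "coeff p i \<noteq> 0" by (simp add: cp)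
    thus False using \<open>p = 0\<close> by simp
  qed
  ultimately show ?thesis by (intro algebraicI'[of p]) (auto simp: cp)
qed

lemma algebraic_if_powers_not_inj:
  fixes x :: complex
  assumes "\<not> inj_on (\<lambda>i. x ^ i) A"
  shows "algebraic x"
proof -
  obtain i j where ij: "i \<noteq> j" "x ^ i = x ^ j" using assms by (auto simp: inj_on_def)
  define p where "p = monom (1::complex) i - monom 1 j"
  have "coeff p i = 1" using ij by (simp add: p_def coeff_monom)
  hence "p \<noteq> 0" by auto
  moreover have "poly p x = 0" using ij by (simp add: p_def poly_monom)
  ultimately show ?thesis by (intro algebraicI[of p]) (auto simp: p_def coeff_monom)
qed

section \<open>Number fields, embeddings and the house\<close>

locale num_field =
  fixes K :: "complex set"
  assumes number_field: "number_field K"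
begin

lemma zero_in [simp, intro]: "0 \<in> K" and one_in [simp, intro]: "1 \<in> K"
  using number_field by (auto simp: number_field_def)

lemma add_in [simp, intro]: "x \<in> K \<Longrightarrow> y \<in> K \<Longrightarrow> x + y \<in> K"
  and mult_in [simp, intro]: "x \<in> K \<Longrightarrow> y \<in> K \<Longrightarrow> x * y \<in> K"
  and minus_in [simp, intro]: "x \<in> K \<Longrightarrow> - x \<in> K"
  using number_field by (auto simp: number_field_def)

lemma inverse_in [simp, intro]: "x \<in> K \<Longrightarrow> inverse x \<in> K"
  using number_field by (cases "x = 0") (auto simp: number_field_def)

lemma diff_in [simp, intro]: "x \<in> K \<Longrightarrow> y \<in> K \<Longrightarrow> x - y \<in> K"
  using add_in[of x "- y"] by auto

lemma divide_in [simp, intro]: "x \<in> K \<Longrightarrow> y \<in> K \<Longrightarrow> x / y \<in> K"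
  by (auto simp: divide_inverse)

lemma power_in [simp, intro]: "x \<in> K \<Longrightarrow> x ^ n \<in> K"
  by (induction n) auto

lemma sum_in [intro]: "(\<And>i. i \<in> I \<Longrightarrow> f i \<in> K) \<Longrightarrow> sum f I \<in> K"
  by (induction I rule: infinite_finite_induct) auto

lemma of_nat_in [simp, intro]: "of_nat n \<in> K"
  by (induction n) auto

lemma of_int_in [simp, intro]: "of_int n \<in> K"
  by (cases n rule: int_cases) (auto simp del: of_nat_Suc)

lemma of_rat_in [simp, intro]: "of_rat q \<in> K"
proof -
  obtain m n where "q = Rat.Fract m n" "n > 0" by (cases q) auto
  thus ?thesis by (simp add: of_rat_rat)
qed

lemma finite_rational_basis:
  obtains B where "finite B" "B \<subseteq> K" "\<forall>x\<in>K. \<exists>c :: complex \<Rightarrow> rat. x = (\<Sum>b\<in>B. of_rat (c b) * b)"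
  using number_field unfolding number_field_def by blast

text \<open>Every element of a finite-dimensional extension of \<open>\<rat>\<close> is algebraic: its powers
  \<open>1, x, \<dots>, x^n\<close> (\<open>n\<close> the size of a spanning set) cannot be \<open>\<rat>\<close>-linearly independent.\<close>

lemma algebraic_in:
  assumes x: "x \<in> K"
  shows "algebraic x"
proof -
  obtain B where B: "finite B" "B \<subseteq> K" "\<forall>x\<in>K. \<exists>c :: complex \<Rightarrow> rat. x = (\<Sum>b\<in>B. of_rat (c b) * b)"
    by (rule finite_rational_basis)
  show ?thesis
  proof (cases "inj_on (\<lambda>i. x ^ i) {..card B}")
    case True
    define S where "S = (\<lambda>i. x ^ i) ` {..card B}"
    have "S \<subseteq> rat_vs.span B"
    proof
      fix v assume "v \<in> S"
      hence "v \<in> K" using x by (auto simp: S_def)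
      then obtain c where "v = (\<Sum>b\<in>B. of_rat (c b) * b)" using B(3) by blast
      thus "v \<in> rat_vs.span B" using rat_vs.span_finite[OF B(1)] by auto
    qed
    moreover have "card S = Suc (card B)" using True by (simp add: S_def card_image)
    ultimately have "rat_vs.dependent S"
      using rat_vs.independent_span_bound[OF B(1)] by force
    thus ?thesis using True unfolding S_def by (rule algebraic_if_powers_dependent[rotated])
  qed (rule algebraic_if_powers_not_inj)
qed

context
  fixes \<sigma> assumes emb: "\<sigma> \<in> embeddings K"
begin

lemma emb_add: "x \<in> K \<Longrightarrow> y \<in> K \<Longrightarrow> \<sigma> (x + y) = \<sigma> x + \<sigma> y"
  and emb_mult: "x \<in> K \<Longrightarrow> y \<in> K \<Longrightarrow> \<sigma> (x * y) = \<sigma> x * \<sigma> y"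
  and emb_one: "\<sigma> 1 = 1"
  and emb_outside: "x \<notin> K \<Longrightarrow> \<sigma> x = 0"
  using emb by (auto simp: embeddings_def)

lemma emb_zero: "\<sigma> 0 = 0"
  using emb_add[of 0 0] by simp

lemma emb_minus: "x \<in> K \<Longrightarrow> \<sigma> (- x) = - \<sigma> x"
  using emb_add[of x "- x"] by (simp add: emb_zero eq_neg_iff_add_eq_0 add.commute)

lemma emb_of_int: "\<sigma> (of_int n) = of_int n"
proof -
  have nat: "\<sigma> (of_nat k) = of_nat k" for k
    by (induction k) (auto simp: emb_zero emb_one emb_add add.commute)
  thus ?thesis by (cases n rule: int_cases) (auto simp: emb_minus simp del: of_nat_Suc)
qed

lemma emb_power: "x \<in> K \<Longrightarrow> \<sigma> (x ^ n) = \<sigma> x ^ n"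
  by (induction n) (auto simp: emb_one emb_mult)

lemma emb_divide: "x \<in> K \<Longrightarrow> y \<in> K \<Longrightarrow> y \<noteq> 0 \<Longrightarrow> \<sigma> (x / y) = \<sigma> x / \<sigma> y"
proof -
  assume xy: "x \<in> K" "y \<in> K" "y \<noteq> 0"
  have "\<sigma> (x / y) * \<sigma> y = \<sigma> x" using xy by (simp flip: emb_mult)
  moreover have "\<sigma> y \<noteq> 0" using emb_mult[of y "inverse y"] xy by (auto simp: emb_one)
  ultimately show ?thesis by (simp add: field_simps)
qed

lemma emb_of_rat: "\<sigma> (of_rat q) = of_rat q"
proof -
  obtain m n where "q = Rat.Fract m n" "n > 0" by (cases q) auto
  thus ?thesis by (simp add: of_rat_rat emb_divide emb_of_int)
qed

lemma emb_sum: "(\<And>i. i \<in> I \<Longrightarrow> f i \<in> K) \<Longrightarrow> \<sigma> (sum f I) = (\<Sum>i\<in>I. \<sigma> (f i))"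
  by (induction I rule: infinite_finite_induct) (auto simp: emb_zero emb_add[OF _ sum_in])

lemma emb_rat_linear:
  "(\<And>i. i \<in> I \<Longrightarrow> f i \<in> K) \<Longrightarrow> \<sigma> (\<Sum>i\<in>I. of_rat (q i) * f i) = (\<Sum>i\<in>I. of_rat (q i) * \<sigma> (f i))"
  by (subst emb_sum) (auto simp: emb_mult emb_of_rat)

lemma emb_poly_root:
  assumes "x \<in> K" "\<And>i. coeff p i \<in> \<int>" "poly p x = 0"
  shows "poly p (\<sigma> x) = 0"
proof -
  have coeff: "\<sigma> (coeff p i) = coeff p i" "coeff p i \<in> K" for i
    using assms(2)[of i] by (auto elim!: Ints_cases simp: emb_of_int)
  have "poly p (\<sigma> x) = (\<Sum>i\<le>degree p. \<sigma> (coeff p i * x ^ i))"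
    using assms(1) coeff by (simp add: poly_altdef emb_mult emb_power)
  also have "\<dots> = \<sigma> (poly p x)"
    using assms(1) coeff by (simp add: poly_altdef emb_sum mult_in power_in)
  finally show ?thesis using assms(3) by (simp add: emb_zero)
qed

end

text \<open>\<open>Hom(K, \<complex>)\<close> is finite: an embedding is determined by its values on a rational spanning
  set \<open>B\<close>, and each \<open>b \<in> B\<close> must go to one of the finitely many roots of a polynomial of \<open>b\<close>.\<close>

lemma finite_embeddings: "finite (embeddings K)"
proof -
  obtain B where B: "finite B" "B \<subseteq> K" "\<forall>x\<in>K. \<exists>c :: complex \<Rightarrow> rat. x = (\<Sum>b\<in>B. of_rat (c b) * b)"
    by (rule finite_rational_basis)
  define P where "P = (\<lambda>b. SOME p :: complex poly. (\<forall>i. coeff p i \<in> \<int>) \<and> p \<noteq> 0 \<and> poly p b = 0)"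
  have P: "(\<forall>i. coeff (P b) i \<in> \<int>) \<and> P b \<noteq> 0 \<and> poly (P b) b = 0" if "b \<in> B" for b
  proof -
    have "algebraic b" using that B(2) by (intro algebraic_in) blast
    then obtain p where "\<And>i. coeff p i \<in> \<int>" "p \<noteq> 0" "poly p b = 0" by (rule algebraicE) blast
    hence "(\<forall>i. coeff p i \<in> \<int>) \<and> p \<noteq> 0 \<and> poly p b = 0" by blast
    thus ?thesis unfolding P_def by (rule someI)
  qed
  define Z where "Z = (\<lambda>b. {z. poly (P b) z = 0})"
  define cf where "cf = (\<lambda>x. SOME c :: complex \<Rightarrow> rat. x = (\<Sum>b\<in>B. of_rat (c b) * b))"
  have cf: "x = (\<Sum>b\<in>B. of_rat (cf x b) * b)" if "x \<in> K" for x
  proof -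
    have "\<exists>c :: complex \<Rightarrow> rat. x = (\<Sum>b\<in>B. of_rat (c b) * b)" using B(3) that by blast
    thus ?thesis unfolding cf_def by (rule someI_ex)
  qed
  define \<Phi> where "\<Phi> = (\<lambda>v x. if x \<in> K then (\<Sum>b\<in>B. of_rat (cf x b) * v b) else (0::complex))"
  have "finite (PiE B Z)"
    using B(1) P unfolding Z_def by (intro finite_PiE poly_roots_finite) auto
  moreover have "embeddings K \<subseteq> \<Phi> ` (PiE B Z)"
  proof
    fix \<sigma> assume emb: "\<sigma> \<in> embeddings K"
    have "restrict \<sigma> B \<in> PiE B Z"
    proof (rule PiE_I)
      fix b assume b: "b \<in> B"
      hence "poly (P b) (\<sigma> b) = 0" using P[OF b] B(2) by (intro emb_poly_root[OF emb]) auto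
      thus "restrict \<sigma> B b \<in> Z b" using b by (simp add: Z_def)
    qed simp
    moreover have "\<sigma> x = \<Phi> (restrict \<sigma> B) x" for x
    proof (cases "x \<in> K")
      case True
      have "\<sigma> x = \<sigma> (\<Sum>b\<in>B. of_rat (cf x b) * b)" by (rule arg_cong[OF cf[OF True]])
      also have "\<dots> = (\<Sum>b\<in>B. of_rat (cf x b) * \<sigma> b)"
        using B(2) by (intro emb_rat_linear[OF emb]) blast
      finally show ?thesis using True by (simp add: \<Phi>_def)
    qed (simp add: \<Phi>_def emb_outside[OF emb])
    ultimately show "\<sigma> \<in> \<Phi> ` (PiE B Z)" by (intro image_eqI[of _ _ "restrict \<sigma> B"] ext)
  qed
  ultimately show ?thesis by (rule finite_surj)
qed

lemma identity_embedding: "(\<lambda>x. if x \<in> K then x else 0) \<in> embeddings K"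
  by (auto simp: embeddings_def)

lemma house_ge: "\<sigma> \<in> embeddings K \<Longrightarrow> cmod (\<sigma> x) \<le> house K x"
  unfolding house_def using finite_embeddings by (intro Max_ge) auto

lemma house_le: "(\<And>\<sigma>. \<sigma> \<in> embeddings K \<Longrightarrow> cmod (\<sigma> x) \<le> C) \<Longrightarrow> house K x \<le> C"
  unfolding house_def using finite_embeddings identity_embedding by (subst Max_le_iff) auto

lemma house_nonneg: "0 \<le> house K x"
  using house_ge[OF identity_embedding, of x] norm_ge_zero order_trans by blast

lemma house_mult: "x \<in> K \<Longrightarrow> y \<in> K \<Longrightarrow> house K (x * y) \<le> house K x * house K y"
  by (intro house_le)
    (auto simp: emb_mult norm_mult intro: mult_mono house_ge house_nonneg)

lemma house_zero: "house K 0 = 0"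
  using house_le[of 0 0] house_nonneg[of 0] by (simp add: emb_zero)

subsection \<open>The ring of integers\<close>

abbreviation OK :: "complex set" where "OK \<equiv> ring_of_integers K"

lemma OK_iff: "x \<in> OK \<longleftrightarrow> x \<in> K \<and> algebraic_int x"
  by (simp add: ring_of_integers_def)

lemma OK_in_K: "x \<in> OK \<Longrightarrow> x \<in> K"
  by (simp add: OK_iff)

lemma of_int_OK [simp, intro]: "of_int n \<in> OK"
  and add_OK [intro]: "x \<in> OK \<Longrightarrow> y \<in> OK \<Longrightarrow> x + y \<in> OK"
  and mult_OK [intro]: "x \<in> OK \<Longrightarrow> y \<in> OK \<Longrightarrow> x * y \<in> OK"
  and minus_OK [intro]: "x \<in> OK \<Longrightarrow> - x \<in> OK"
  and power_OK [intro]: "x \<in> OK \<Longrightarrow> x ^ k \<in> OK"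
  and sum_OK [intro]: "(\<And>i. i \<in> I \<Longrightarrow> f i \<in> OK) \<Longrightarrow> sum f I \<in> OK"
  by (auto simp: OK_iff algebraic_int_add_mult algebraic_int_power intro!: algebraic_int_sum)

lemma zero_OK [simp, intro]: "0 \<in> OK" and one_OK [simp, intro]: "1 \<in> OK"
  using of_int_OK[of 0] of_int_OK[of 1] by simp_all

lemma diff_OK [intro]: "x \<in> OK \<Longrightarrow> y \<in> OK \<Longrightarrow> x - y \<in> OK"
  using add_OK[of x "- y"] by auto

text \<open>\<open>K\<close> is spanned over \<open>\<rat>\<close> by finitely many algebraic integers: scale each vector of a
  rational spanning set by a positive integer that makes it integral.\<close>

lemma integral_rational_basis:
  obtains B where "finite B" "B \<subseteq> OK" "\<forall>x\<in>K. \<exists>c :: complex \<Rightarrow> rat. x = (\<Sum>b\<in>B. of_rat (c b) * b)"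
proof -
  obtain B0 where B0: "finite B0" "B0 \<subseteq> K"
    "\<forall>x\<in>K. \<exists>c :: complex \<Rightarrow> rat. x = (\<Sum>b\<in>B0. of_rat (c b) * b)"
    by (rule finite_rational_basis)
  define m where "m = (\<lambda>b::complex. SOME k::int. k > 0 \<and> algebraic_int (of_int k * b))"
  have m: "m b > 0 \<and> algebraic_int (of_int (m b) * b)" if "b \<in> B0" for b
  proof -
    have "b \<in> K" using that B0(2) by blast
    from algebraic_int_multiple[OF algebraic_in[OF this]] show ?thesis unfolding m_def by (rule someI_ex)
  qed
  define \<beta> where "\<beta> = (\<lambda>b. of_int (m b) * b)"
  show thesis
  proof (rule that[of "\<beta> ` B0"])
    show "finite (\<beta> ` B0)" using B0(1) by simp
    show "\<beta> ` B0 \<subseteq> OK" using m B0(2) by (auto simp: OK_iff \<beta>_def)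
    show "\<forall>x\<in>K. \<exists>c :: complex \<Rightarrow> rat. x = (\<Sum>y\<in>\<beta> ` B0. of_rat (c y) * y)"
    proof
      fix x assume "x \<in> K"
      then obtain c where c: "x = (\<Sum>b\<in>B0. of_rat (c b) * b)" using B0(3) by blast
      define t where "t = (\<lambda>b. c b / of_int (m b))"
      have "x = (\<Sum>b\<in>B0. of_rat (t b) * \<beta> b)"
        unfolding c by (intro sum.cong refl) (use m in \<open>fastforce simp: t_def \<beta>_def of_rat_divide\<close>)
      also have "\<dots> = (\<Sum>y\<in>\<beta> ` B0. \<Sum>b | b \<in> B0 \<and> \<beta> b = y. of_rat (t b) * \<beta> b)"
        using B0(1) by (rule sum.image_gen)
      also have "\<dots> = (\<Sum>y\<in>\<beta> ` B0. of_rat (\<Sum>b | b \<in> B0 \<and> \<beta> b = y. t b) * y)"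
        by (intro sum.cong refl) (simp add: of_rat_sum sum_distrib_right)
      finally show "\<exists>c :: complex \<Rightarrow> rat. x = (\<Sum>y\<in>\<beta> ` B0. of_rat (c y) * y)"
        by (intro exI[of _ "\<lambda>y. \<Sum>b | b \<in> B0 \<and> \<beta> b = y. t b"])
    qed
  qed
qed

text \<open>Write \<open>v\<close> in an integral rational basis and reduce each coordinate modulo \<open>N\<close>.\<close>

lemma approximation_mod_integer:
  "\<exists>C\<ge>0. \<forall>v\<in>K. \<forall>N::int. N > 0 \<longrightarrow>
     (\<exists>z\<in>OK. \<forall>\<sigma>\<in>embeddings K. cmod (\<sigma> (v - of_int N * z)) \<le> of_int N * C)"
proof -
  obtain B where B: "finite B" "B \<subseteq> OK" "\<forall>x\<in>K. \<exists>c :: complex \<Rightarrow> rat. x = (\<Sum>b\<in>B. of_rat (c b) * b)"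
    by (rule integral_rational_basis)
  define C where "C = (\<Sum>b\<in>B. house K b)"
  have "\<exists>z\<in>OK. \<forall>\<sigma>\<in>embeddings K. cmod (\<sigma> (v - of_int N * z)) \<le> of_int N * C"
    if v: "v \<in> K" and N: "N > 0" for v N
  proof -
    obtain t where t: "v = (\<Sum>b\<in>B. of_rat (t b) * b)" using B(3) v by blast
    define f where "f = (\<lambda>b. \<lfloor>t b / of_int N\<rfloor>)"
    define z where "z = (\<Sum>b\<in>B. of_int (f b) * b)"
    define r where "r = (\<lambda>b. t b - of_int N * of_int (f b))"
    have r: "0 \<le> r b" "(of_rat (r b) :: real) \<le> of_int N" for b
    proof -
      have "of_int (f b) \<le> t b / of_int N \<and> t b / of_int N < of_int (f b) + 1"
        unfolding f_def using floor_correct by auto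
      hence "0 \<le> r b \<and> r b \<le> of_int N" using N by (auto simp: r_def field_simps)
      thus "0 \<le> r b" "(of_rat (r b) :: real) \<le> of_int N"
        by (auto, metis of_rat_less_eq of_rat_of_int_eq)
    qed
    have rest: "v - of_int N * z = (\<Sum>b\<in>B. of_rat (r b) * b)"
      by (simp add: t z_def r_def sum_distrib_left sum_subtractf of_rat_diff of_rat_mult
          algebra_simps)
    have "cmod (\<sigma> (v - of_int N * z)) \<le> of_int N * C" if emb: "\<sigma> \<in> embeddings K" for \<sigma>
    proof -
      have "cmod (\<sigma> (v - of_int N * z)) = cmod (\<Sum>b\<in>B. of_rat (r b) * \<sigma> b)"
        unfolding rest using B(2) by (subst emb_rat_linear[OF emb]) (auto intro: OK_in_K)
      also have "\<dots> \<le> (\<Sum>b\<in>B. of_rat (r b) * cmod (\<sigma> b))"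
        using r by (intro order.trans[OF norm_sum] sum_mono) (simp add: norm_mult cmod_of_rat)
      also have "\<dots> \<le> (\<Sum>b\<in>B. of_int N * house K b)"
        using r house_ge[OF emb] N by (intro sum_mono mult_mono) auto
      finally show ?thesis by (simp add: C_def sum_distrib_left)
    qed
    moreover have "z \<in> OK" unfolding z_def using B(2) by (intro sum_OK mult_OK of_int_OK) auto
    ultimately show ?thesis by blast
  qed
  moreover have "C \<ge> 0" unfolding C_def by (intro sum_nonneg house_nonneg)
  ultimately show ?thesis by blast
qed

end

locale num_field_loc = num_field +
  fixes a :: complex
  assumes a_OK: "a \<in> OK" and a_nonzero: "a \<noteq> 0"
begin

abbreviation OKa :: "complex set" where "OKa \<equiv> invert_elem OK a"

lemma OKa_iff: "x \<in> OKa \<longleftrightarrow> (\<exists>r k. r \<in> OK \<and> x = r / a ^ k)"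
  by (auto simp: invert_elem_def)

lemma OK_OKa [intro]: "x \<in> OK \<Longrightarrow> x \<in> OKa"
  unfolding OKa_iff by (intro exI[of _ x] exI[of _ 0]) simp

lemma OKa_in_K: "x \<in> OKa \<Longrightarrow> x \<in> K"
  using a_OK by (auto simp: OKa_iff OK_iff)

lemma add_OKa [intro]: "x \<in> OKa \<Longrightarrow> y \<in> OKa \<Longrightarrow> x + y \<in> OKa"
  and mult_OKa [intro]: "x \<in> OKa \<Longrightarrow> y \<in> OKa \<Longrightarrow> x * y \<in> OKa"
proof -
  assume "x \<in> OKa" "y \<in> OKa"
  then obtain r1 k1 r2 k2 where r: "r1 \<in> OK" "r2 \<in> OK" "x = r1 / a ^ k1" "y = r2 / a ^ k2"
    unfolding OKa_iff by blast
  have "x + y = (r1 * a ^ k2 + r2 * a ^ k1) / a ^ (k1 + k2)" "x * y = (r1 * r2) / a ^ (k1 + k2)"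
    using a_nonzero by (simp_all add: r field_simps power_add)
  moreover have "r1 * a ^ k2 + r2 * a ^ k1 \<in> OK" "r1 * r2 \<in> OK" using r a_OK by auto
  ultimately show "x + y \<in> OKa" "x * y \<in> OKa" unfolding OKa_iff by blast+
qed

lemma minus_OKa [intro]: "x \<in> OKa \<Longrightarrow> - x \<in> OKa"
  using mult_OKa[of "-1" x] by auto

lemma diff_OKa [intro]: "x \<in> OKa \<Longrightarrow> y \<in> OKa \<Longrightarrow> x - y \<in> OKa"
  using add_OKa[of x "- y"] by auto

lemma sum_OKa [intro]: "(\<And>i. i \<in> I \<Longrightarrow> f i \<in> OKa) \<Longrightarrow> sum f I \<in> OKa"
  by (induction I rule: infinite_finite_induct) auto

text \<open>Every element of \<open>OK[1/a]\<close> is congruent to an element of \<open>OK\<close> modulo \<open>N \<cdot> OK[1/a]\<close>: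
  for \<open>s = r / a^k\<close> take \<open>c = r a^(p k - k)\<close>, using the periodicity of the powers of \<open>a\<close> mod \<open>N\<close>.\<close>

lemma congruent_to_integral:
  assumes N: "N > 0" and s: "s \<in> OKa"
  shows "\<exists>c\<in>OK. (c - s) / of_int N \<in> OKa"
proof -
  obtain r k where r: "r \<in> OK" "s = r / a ^ k" using s unfolding OKa_iff by blast
  obtain i p where p: "p > 0" "\<And>k. algebraic_int (a ^ i * (1 - a ^ (p * k)) / of_int N)"
    using algebraic_int_powers_periodic[OF _ N] a_OK unfolding OK_iff by blast
  define y where "y = a ^ i * (1 - a ^ (p * k)) / of_int N"
  have y: "y \<in> OK" using p(2) a_OK by (auto simp: OK_iff y_def intro!: divide_in OK_in_K)
  define c where "c = r * a ^ (p * k - k)"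
  have "a ^ (p * k) = a ^ (p * k - k) * a ^ k"
    using p(1) by (simp flip: power_add)
  hence "(c - s) / of_int N = (- r * y) / a ^ (i + k)"
    using a_nonzero N by (simp add: c_def r(2) y_def field_simps power_add)
  moreover have "- r * y \<in> OK" using r y by auto
  moreover have "c \<in> OK" using r a_OK by (auto simp: c_def)
  ultimately show ?thesis unfolding OKa_iff by blast
qed

text \<open>Write \<open>b = r_b / a^j\<close>, pick \<open>N > 0\<close> divisible by \<open>r_b\<close>, and
  adjust an integral representative of \<open>s\<close> mod \<open>N\<close> by a multiple of \<open>N\<close> close to \<open>w\<close>.\<close>

lemma correction:
  assumes b: "b \<in> OKa" "b \<noteq> 0"
  shows "\<exists>C\<ge>0. \<forall>s\<in>OKa. \<forall>w\<in>K. \<exists>c\<in>OK. (c - s) / b \<in> OKa \<and> (\<forall>\<sigma>\<in>embeddings K. cmod (\<sigma> (c - w)) \<le> C)"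
proof -
  obtain rb j where rb: "rb \<in> OK" "b = rb / a ^ j" using b(1) unfolding OKa_iff by blast
  have rb0: "rb \<noteq> 0" using rb b(2) by auto
  obtain N where N: "N > 0" "algebraic_int (of_int N / rb)"
    using algebraic_int_divides_integer[of rb] rb(1) rb0 by (auto simp: OK_iff)
  have N_rb: "of_int N / rb \<in> OK" using N(2) rb by (auto simp: OK_iff intro: OK_in_K)
  obtain C where C: "C \<ge> 0" "\<And>v N. v \<in> K \<Longrightarrow> (N::int) > 0 \<Longrightarrow>
     \<exists>z\<in>OK. \<forall>\<sigma>\<in>embeddings K. cmod (\<sigma> (v - of_int N * z)) \<le> of_int N * C"
    using approximation_mod_integer by blast
  have "\<exists>c\<in>OK. (c - s) / b \<in> OKa \<and> (\<forall>\<sigma>\<in>embeddings K. cmod (\<sigma> (c - w)) \<le> of_int N * C)"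
    if s: "s \<in> OKa" and w: "w \<in> K" for s w
  proof -
    obtain c0 where c0: "c0 \<in> OK" "(c0 - s) / of_int N \<in> OKa"
      using congruent_to_integral[OF N(1) s] by blast
    obtain z where z: "z \<in> OK" "\<forall>\<sigma>\<in>embeddings K. cmod (\<sigma> (c0 - w - of_int N * z)) \<le> of_int N * C"
      using C(2)[OF _ N(1), of "c0 - w"] w c0(1) by (auto intro: OK_in_K)
    define c where "c = c0 - of_int N * z"
    have "(c - s) / b = a ^ j * (of_int N / rb) * ((c0 - s) / of_int N - z)"
      using rb0 a_nonzero N(1) by (simp add: c_def rb(2) field_simps)
    also have "\<dots> \<in> OKa" by (intro mult_OKa diff_OKa OK_OKa power_OK a_OK N_rb c0 z)
    finally have "(c - s) / b \<in> OKa" .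
    moreover have "c \<in> OK" using c0 z by (auto simp: c_def)
    moreover have "c - w = c0 - w - of_int N * z" by (simp add: c_def)
    ultimately show ?thesis using z(2) by metis
  qed
  moreover have "of_int N * C \<ge> 0" using N C by simp
  ultimately show ?thesis by blast
qed

end

section \<open>Subexponential growth\<close>

text \<open>For nonnegative sequences this is exactly the condition \<open>limsup u(n)^(1/n) \<le> 1\<close> defining
  \<open>S{t}\<close>, but it is much easier to manipulate.\<close>

definition subexp :: "(nat \<Rightarrow> real) \<Rightarrow> bool" where
  "subexp u \<longleftrightarrow> (\<forall>\<epsilon>>0. \<exists>C. \<forall>n. u n \<le> C * (1 + \<epsilon>) ^ n)"

text \<open>Subexponential growth implies \<open>limsup u(n)^(1/n) \<le> 1\<close>, since \<open>C^(1/n) \<rightarrow> 1\<close>; conversely,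
  \<open>limsup u(n)^(1/n) < 1 + \<epsilon>\<close> bounds all but finitely many terms by \<open>(1 + \<epsilon>)^n\<close>.\<close>

lemma limsup_root_le_one_if_subexp:
  assumes "subexp u"
  shows "limsup (\<lambda>n. ereal (root n (u n))) \<le> 1"
proof (rule ereal_le_epsilon2)
  fix \<epsilon> :: real assume \<epsilon>: "\<epsilon> > 0"
  obtain C where C: "\<And>n. u n \<le> C * (1 + \<epsilon>) ^ n"
    using assms \<epsilon> unfolding subexp_def by blast
  define C' where "C' = max C 0 + 1"
  have C': "C' > 0" by (simp add: C'_def)
  have "eventually (\<lambda>n. ereal (root n (u n)) \<le> ereal (root n C' * (1 + \<epsilon>))) sequentially"
    unfolding eventually_sequentially
  proof (intro exI[of _ 1] allI impI)
    fix n :: nat assume n: "n \<ge> 1"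
    have "C * (1 + \<epsilon>) ^ n \<le> C' * (1 + \<epsilon>) ^ n" using \<epsilon> by (intro mult_right_mono) (auto simp: C'_def)
    hence "u n \<le> C' * (1 + \<epsilon>) ^ n" using C[of n] by linarith
    hence "root n (u n) \<le> root n (C' * (1 + \<epsilon>) ^ n)" using n by (simp add: real_root_le_iff)
    also have "\<dots> = root n C' * (1 + \<epsilon>)" using n \<epsilon> by (simp add: real_root_mult real_root_power_cancel)
    finally show "ereal (root n (u n)) \<le> ereal (root n C' * (1 + \<epsilon>))" by simp
  qed
  hence "limsup (\<lambda>n. ereal (root n (u n))) \<le> limsup (\<lambda>n. ereal (root n C' * (1 + \<epsilon>)))"
    by (rule Limsup_mono)
  also have "\<dots> = ereal (1 * (1 + \<epsilon>))"
    by (intro lim_imp_Limsup tendsto_ereal tendsto_mult LIMSEQ_root_const C' tendsto_const) simp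
  finally show "limsup (\<lambda>n. ereal (root n (u n))) \<le> 1 + ereal \<epsilon>"
    by (simp add: add.commute one_ereal_def)
qed

lemma subexp_if_limsup_root_le_one:
  assumes nonneg: "\<And>n. 0 \<le> u n" and limsup: "limsup (\<lambda>n. ereal (root n (u n))) \<le> 1"
  shows "subexp u"
  unfolding subexp_def
proof (intro allI impI)
  fix \<epsilon> :: real assume \<epsilon>: "\<epsilon> > 0"
  have "limsup (\<lambda>n. ereal (root n (u n))) < ereal (1 + \<epsilon>)"
    using limsup \<epsilon> by (simp add: one_ereal_def le_less_trans)
  from Limsup_lessD[OF this] obtain N where N: "\<And>n. n \<ge> N \<Longrightarrow> root n (u n) < 1 + \<epsilon>"
    by (auto simp: eventually_sequentially)
  define C where "C = 1 + (\<Sum>n\<le>N. u n)"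
  have C: "C \<ge> 1" unfolding C_def using nonneg by (simp add: sum_nonneg)
  have "u n \<le> C * (1 + \<epsilon>) ^ n" for n
  proof (cases "n \<le> N")
    case True
    have "u n \<le> (\<Sum>n\<le>N. u n)" using True nonneg by (intro member_le_sum) auto
    also have "\<dots> \<le> C * 1" by (simp add: C_def)
    also have "\<dots> \<le> C * (1 + \<epsilon>) ^ n" using C \<epsilon> by (intro mult_left_mono one_le_power) auto
    finally show ?thesis .
  next
    case False
    have "u n = root n (u n) ^ n" using False nonneg by (simp add: real_root_pow_pos2)
    also have "\<dots> \<le> (1 + \<epsilon>) ^ n"
      using N[of n] False nonneg by (intro power_mono) (auto simp: real_root_ge_zero)
    also have "\<dots> \<le> C * (1 + \<epsilon>) ^ n" using C \<epsilon> by simp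
    finally show ?thesis .
  qed
  thus "\<exists>C. \<forall>n. u n \<le> C * (1 + \<epsilon>) ^ n" by blast
qed

lemma subexp_iff_limsup:
  "(\<And>n. 0 \<le> u n) \<Longrightarrow> subexp u \<longleftrightarrow> limsup (\<lambda>n. ereal (root n (u n))) \<le> 1"
  using limsup_root_le_one_if_subexp subexp_if_limsup_root_le_one by blast

lemma subexp_mono: "subexp v \<Longrightarrow> (\<And>n. u n \<le> v n) \<Longrightarrow> subexp u"
  unfolding subexp_def by (meson order_trans)

lemma subexp_bounded:
  assumes "\<And>n. u n \<le> C"
  shows "subexp u"
  unfolding subexp_def
proof (intro allI impI exI[of _ "max C 0"])
  fix \<epsilon> :: real and n assume "\<epsilon> > 0"
  have "u n \<le> max C 0 * 1" using assms[of n] by simp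
  also have "\<dots> \<le> max C 0 * (1 + \<epsilon>) ^ n" using \<open>\<epsilon> > 0\<close> by (intro mult_left_mono one_le_power) auto
  finally show "u n \<le> max C 0 * (1 + \<epsilon>) ^ n" .
qed

text \<open>For \<open>(1+\<delta>)^2 = 1+\<epsilon>\<close> the \<open>k+1\<close> terms
  of size \<open>(1+\<delta>)^k\<close> are absorbed by Bernoulli's inequality \<open>1 + k \<delta> \<le> (1+\<delta>)^k\<close>.\<close>

lemma subexp_cauchy_product:
  assumes u: "\<And>n. 0 \<le> u n" "subexp u" and v: "\<And>n. 0 \<le> v n" "subexp v"
  shows "subexp (\<lambda>k. \<Sum>i\<le>k. u i * v (k - i))"
  unfolding subexp_def
proof (intro allI impI)
  fix \<epsilon> :: real assume \<epsilon>: "\<epsilon> > 0"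
  define \<delta> where "\<delta> = sqrt (1 + \<epsilon>) - 1"
  have \<delta>: "\<delta> > 0" "(1 + \<delta>) ^ 2 = 1 + \<epsilon>" using \<epsilon> by (simp_all add: \<delta>_def)
  obtain Cu Cv where Cu: "\<And>n. u n \<le> Cu * (1 + \<delta>) ^ n" and Cv: "\<And>n. v n \<le> Cv * (1 + \<delta>) ^ n"
    using u(2) v(2) \<delta>(1) unfolding subexp_def by meson
  have "Cu \<ge> 0" "Cv \<ge> 0"
    using Cu[of 0] Cv[of 0] u(1)[of 0] v(1)[of 0] by auto
  have "(\<Sum>i\<le>k. u i * v (k - i)) \<le> ((1 + 1 / \<delta>) * Cu * Cv) * (1 + \<epsilon>) ^ k" for k
  proof -
    have "(\<Sum>i\<le>k. u i * v (k - i)) \<le> (\<Sum>i\<le>k. (Cu * (1 + \<delta>) ^ i) * (Cv * (1 + \<delta>) ^ (k - i)))"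
      using Cu Cv u(1) v(1) \<open>Cu \<ge> 0\<close> \<delta>(1) by (intro sum_mono mult_mono) auto
    also have "\<dots> = (real k + 1) * (Cu * Cv * (1 + \<delta>) ^ k)"
      by (simp add: mult_ac flip: power_add)
    also have "real k + 1 \<le> (1 + 1 / \<delta>) * (1 + \<delta>) ^ k"
    proof -
      have "1 + real k * \<delta> \<le> (1 + \<delta>) ^ k" using \<delta> by (intro Bernoulli_inequality) auto
      hence "(1 + 1 / \<delta>) * (1 + real k * \<delta>) \<le> (1 + 1 / \<delta>) * (1 + \<delta>) ^ k"
        using \<delta> by (intro mult_left_mono) auto
      moreover have "(1 + 1 / \<delta>) * (1 + real k * \<delta>) = 1 + real k * \<delta> + 1 / \<delta> + real k"
        using \<delta> by (simp add: field_simps)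
      moreover have "real k * \<delta> \<ge> 0" "1 / \<delta> \<ge> 0" using \<delta> by auto
      ultimately show ?thesis by linarith
    qed
    hence "(real k + 1) * (Cu * Cv * (1 + \<delta>) ^ k) \<le> ((1 + 1 / \<delta>) * (1 + \<delta>) ^ k) * (Cu * Cv * (1 + \<delta>) ^ k)"
      using \<open>Cu \<ge> 0\<close> \<open>Cv \<ge> 0\<close> \<delta> by (intro mult_right_mono) auto
    also have "\<dots> = ((1 + 1 / \<delta>) * Cu * Cv) * ((1 + \<delta>) ^ 2) ^ k"
      by (simp add: mult_ac power2_eq_square power_mult_distrib)
    finally show ?thesis using \<delta>(2) by simp
  qed
  thus "\<exists>C. \<forall>k. (\<Sum>i\<le>k. u i * v (k - i)) \<le> C * (1 + \<epsilon>) ^ k" by blast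
qed

section \<open>Power series and the construction of the multiplier\<close>

lemma strong_recursion:
  fixes F :: "(nat \<Rightarrow> 'a) \<Rightarrow> nat \<Rightarrow> 'a"
  obtains f where "\<And>n. f n = F (\<lambda>j. if j < n then f j else undefined) n"
proof
  define f where "f = wfrec {(i, j). i < (j::nat)} F"
  show "f n = F (\<lambda>j. if j < n then f j else undefined) n" for n
    using def_wfrec[OF f_def[THEN eq_reflection] wf_less, of n] by (simp add: cut_def)
qed

text \<open>If \<open>g = b t^m + \<dots>\<close> with \<open>m\<close> the subdegree, the coefficient of \<open>t^(m+n)\<close> in \<open>g h\<close> is
  \<open>b h\<^sub>n\<close> plus a sum involving only \<open>h\<^sub>0, \<dots>, h\<^sub>(n-1)\<close>.  This is what makes the coefficients of
  \<open>h\<close> solvable one at a time.\<close>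

definition tail_sum :: "'a :: comm_ring_1 fps \<Rightarrow> (nat \<Rightarrow> 'a) \<Rightarrow> nat \<Rightarrow> 'a" where
  "tail_sum g f n = (\<Sum>i = Suc (subdegree g)..subdegree g + n. fps_nth g i * f (subdegree g + n - i))"

lemma fps_mult_nth_after_subdegree:
  fixes g h :: "'a :: comm_ring_1 fps"
  shows "fps_nth (g * h) (subdegree g + n) = fps_nth g (subdegree g) * fps_nth h n + tail_sum g (fps_nth h) n"
  unfolding fps_mult_nth_conv_upto_subdegree_left tail_sum_def
  by (subst sum.atLeast_Suc_atMost) simp_all

lemma tail_sum_cong: "(\<And>j. j < n \<Longrightarrow> f j = f' j) \<Longrightarrow> tail_sum g f n = tail_sum g f' n"
  unfolding tail_sum_def by (intro sum.cong) auto

lemma tail_sum_0 [simp]: "tail_sum g f 0 = 0"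
  by (simp add: tail_sum_def)

lemma fps_recursive_coefficients:
  fixes g :: "'a :: comm_ring_1 fps"
  obtains h where "fps_nth h 0 = e" "\<And>n. n > 0 \<Longrightarrow> fps_nth h n = F (tail_sum g (fps_nth h) n)"
proof -
  define step where "step = (\<lambda>f n. if n = 0 then e else F (tail_sum g f n))"
  obtain hs where hs: "\<And>n. hs n = step (\<lambda>i. if i < n then hs i else undefined) n"
    using strong_recursion[of step] by blast
  have nth: "fps_nth (Abs_fps hs) = hs" by (simp add: fun_eq_iff)
  show thesis
  proof (rule that[of "Abs_fps hs"])
    show "fps_nth (Abs_fps hs) 0 = e" using hs[of 0] by (simp add: nth step_def)
    show "fps_nth (Abs_fps hs) n = F (tail_sum g (fps_nth (Abs_fps hs)) n)" if "n > 0" for n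
      using hs[of n] that tail_sum_cong[of n "\<lambda>i. if i < n then hs i else undefined" hs g]
      by (simp add: nth step_def)
  qed
qed

context num_field
begin

lemma conv_fps_iff: "f \<in> conv_fps K S \<longleftrightarrow> (\<forall>n. fps_nth f n \<in> S) \<and> subexp (\<lambda>n. house K (fps_nth f n))"
  by (simp add: conv_fps_def fps_over_def subexp_iff_limsup house_nonneg)

lemma bounded_in_conv_fps:
  assumes "\<And>n. fps_nth f n \<in> S" "\<And>n. house K (fps_nth f n) \<le> C"
  shows "f \<in> conv_fps K S"
  using assms by (auto simp: conv_fps_iff intro: subexp_bounded)

lemma subexp_house_mult:
  assumes "\<And>n. fps_nth g n \<in> K" "\<And>n. fps_nth h n \<in> K"
    and "subexp (\<lambda>n. house K (fps_nth g n))" "subexp (\<lambda>n. house K (fps_nth h n))"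
  shows "subexp (\<lambda>n. house K (fps_nth (g * h) n))"
proof (rule subexp_mono)
  show "subexp (\<lambda>k. \<Sum>i\<le>k. house K (fps_nth g i) * house K (fps_nth h (k - i)))"
    using assms(3,4) by (intro subexp_cauchy_product house_nonneg)
  show "house K (fps_nth (g * h) k) \<le> (\<Sum>i\<le>k. house K (fps_nth g i) * house K (fps_nth h (k - i)))" for k
  proof (rule house_le)
    fix \<sigma> assume emb: "\<sigma> \<in> embeddings K"
    have "cmod (\<sigma> (fps_nth (g * h) k)) = cmod (\<Sum>i\<le>k. \<sigma> (fps_nth g i) * \<sigma> (fps_nth h (k - i)))"
      using assms(1,2) by (simp add: fps_mult_nth atLeast0AtMost emb_sum[OF emb] emb_mult[OF emb])
    also have "\<dots> \<le> (\<Sum>i\<le>k. house K (fps_nth g i) * house K (fps_nth h (k - i)))"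
      by (intro order.trans[OF norm_sum] sum_mono)
        (auto simp: norm_mult intro: mult_mono house_ge[OF emb] house_nonneg)
    finally show "cmod (\<sigma> (fps_nth (g * h) k)) \<le> \<dots>" .
  qed
qed

end

context num_field_loc
begin

text \<open>Given a "correction" \<open>cf\<close> that turns each \<open>s \<in> OK[1/a]\<close> into
  \<open>cf s \<in> OK\<close> with \<open>(cf s - s)/b \<in> OK[1/a]\<close>, where \<open>b\<close> is the lowest nonzero coefficient of \<open>g\<close>,
  define \<open>h\<^sub>0 = a^j\<close> (clearing the denominator of \<open>b\<close>) and \<open>h\<^sub>n = (cf s\<^sub>n - s\<^sub>n)/b\<close>, where \<open>s\<^sub>n\<close> is the
  contribution of \<open>h\<^sub>0, \<dots>, h\<^sub>(n-1)\<close> to the coefficient of \<open>t^(m+n)\<close> in \<open>g h\<close>.  That coefficient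
  then equals \<open>cf s\<^sub>n\<close>, so all coefficients of \<open>g h\<close> are integral.\<close>

lemma multiplier_from_corrections:
  assumes g: "\<And>n. fps_nth g n \<in> OKa" "g \<noteq> 0"
    and cf: "\<And>s. s \<in> OKa \<Longrightarrow> cf s \<in> OK \<and> (cf s - s) / fps_nth g (subdegree g) \<in> OKa"
  shows "\<exists>h. h \<noteq> 0 \<and> (\<forall>n. fps_nth h n \<in> OKa) \<and> (\<forall>n. fps_nth (g * h) n \<in> OK) \<and>
    (\<forall>n>0. \<exists>s\<in>OKa. fps_nth (g * h) (subdegree g + n) = cf s \<and>
                     fps_nth h n = (cf s - s) / fps_nth g (subdegree g))"
proof -
  define m where "m = subdegree g"
  define b where "b = fps_nth g m"
  have b: "b \<in> OKa" "b \<noteq> 0" using g by (auto simp: b_def m_def)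
  obtain rb j where rb: "rb \<in> OK" "b = rb / a ^ j" using b(1) unfolding OKa_iff by blast
  obtain h where h_0: "fps_nth h 0 = a ^ j"
    and h_pos: "\<And>n. n > 0 \<Longrightarrow> fps_nth h n = (cf (tail_sum g (fps_nth h) n) - tail_sum g (fps_nth h) n) / b"
    by (rule fps_recursive_coefficients[where e = "a ^ j" and F = "\<lambda>s. (cf s - s) / b" and g = g]) blast
  define s where "s = tail_sum g (fps_nth h)"
  have s_OKa: "s n \<in> OKa" if "\<And>j. j < n \<Longrightarrow> fps_nth h j \<in> OKa" for n
    unfolding s_def tail_sum_def using that g(1) by (intro sum_OKa mult_OKa) auto
  have h_OKa: "fps_nth h n \<in> OKa" for n
  proof (induction n rule: less_induct)
    case (less n)
    show ?case
    proof (cases "n = 0")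
      case False thus ?thesis using h_pos cf[OF s_OKa[OF less]] by (simp add: s_def b_def m_def)
    qed (use h_0 a_OK in auto)
  qed
  have coeff: "fps_nth (g * h) (m + n) = (if n = 0 then rb else cf (s n))" for n
    using fps_mult_nth_after_subdegree[of g h n] h_0 h_pos[of n] rb(2) a_nonzero b(2)
    by (simp add: m_def b_def s_def)
  show ?thesis
  proof (intro exI[of _ h] conjI allI impI)
    have "fps_nth h 0 \<noteq> 0" using h_0 a_nonzero by simp
    thus "h \<noteq> 0" by auto
    show "fps_nth h n \<in> OKa" for n by (rule h_OKa)
    show "\<exists>s\<in>OKa. fps_nth (g * h) (subdegree g + n) = cf s \<and> fps_nth h n = (cf s - s) / fps_nth g (subdegree g)"
      if "n > 0" for n
      using coeff[of n] h_pos[OF that] that s_OKa h_OKa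
      by (intro bexI[of _ "s n"]) (auto simp: m_def b_def s_def)
    show "fps_nth (g * h) k \<in> OK" for k
    proof (cases "k < m")
      case False
      then obtain n where "k = m + n" by (metis le_add_diff_inverse not_less)
      thus ?thesis using coeff[of n] rb(1) cf[OF s_OKa] h_OKa by simp
    qed (simp add: fps_mult_nth_eq0 m_def)
  qed
qed

text \<open>Case \<open>D = OK[1/a][[t]]\<close>: choose the corrections close to \<open>0\<close>, so that \<open>g h\<close> has bounded
  coefficients.\<close>

lemma multiplier_fps_over:
  assumes g: "g \<in> fps_over OKa" "g \<noteq> 0"
  shows "\<exists>h\<in>fps_over OKa. h \<noteq> 0 \<and> g * h \<in> conv_fps K OK"
proof -
  define b where "b = fps_nth g (subdegree g)"
  have b: "b \<in> OKa" "b \<noteq> 0" using g by (auto simp: b_def fps_over_def)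
  obtain C where C: "C \<ge> 0"
    "\<forall>s\<in>OKa. \<forall>w\<in>K. \<exists>c\<in>OK. (c - s) / b \<in> OKa \<and> (\<forall>\<sigma>\<in>embeddings K. cmod (\<sigma> (c - w)) \<le> C)"
    using correction[OF b] by blast
  define cf where
    "cf = (\<lambda>s. SOME c. c \<in> OK \<and> (c - s) / b \<in> OKa \<and> (\<forall>\<sigma>\<in>embeddings K. cmod (\<sigma> c) \<le> C))"
  have cf: "cf s \<in> OK \<and> (cf s - s) / b \<in> OKa \<and> (\<forall>\<sigma>\<in>embeddings K. cmod (\<sigma> (cf s)) \<le> C)"
    if "s \<in> OKa" for s
  proof -
    have "\<exists>c\<in>OK. (c - s) / b \<in> OKa \<and> (\<forall>\<sigma>\<in>embeddings K. cmod (\<sigma> (c - 0)) \<le> C)"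
      using C(2) that by blast
    hence "\<exists>c. c \<in> OK \<and> (c - s) / b \<in> OKa \<and> (\<forall>\<sigma>\<in>embeddings K. cmod (\<sigma> c) \<le> C)" by auto
    thus ?thesis unfolding cf_def by (rule someI_ex)
  qed
  have "\<exists>h. h \<noteq> 0 \<and> (\<forall>n. fps_nth h n \<in> OKa) \<and> (\<forall>n. fps_nth (g * h) n \<in> OK) \<and>
    (\<forall>n>0. \<exists>s\<in>OKa. fps_nth (g * h) (subdegree g + n) = cf s \<and> fps_nth h n = (cf s - s) / b)"
    unfolding b_def by (rule multiplier_from_corrections) (use g cf in \<open>auto simp: b_def fps_over_def\<close>)
  then obtain h where h: "h \<noteq> 0" "\<forall>n. fps_nth h n \<in> OKa" "\<forall>n. fps_nth (g * h) n \<in> OK"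
    "\<forall>n>0. \<exists>s\<in>OKa. fps_nth (g * h) (subdegree g + n) = cf s \<and> fps_nth h n = (cf s - s) / b"
    by (elim exE conjE) (rule that)
  have "house K (fps_nth (g * h) k) \<le> C + (\<Sum>i\<le>subdegree g. house K (fps_nth (g * h) i))" for k
  proof (cases "k \<le> subdegree g")
    case True
    thus ?thesis using C(1) house_nonneg by (intro add_increasing member_le_sum) auto
  next
    case False
    then obtain n where n: "n > 0" "k = subdegree g + n" by (metis less_imp_add_positive not_le)
    then obtain s where "s \<in> OKa" "fps_nth (g * h) k = cf s" using h(4) by blast
    hence "house K (fps_nth (g * h) k) \<le> C" using cf by (auto intro: house_le)
    moreover have "0 \<le> (\<Sum>i\<le>subdegree g. house K (fps_nth (g * h) i))"
      by (intro sum_nonneg house_nonneg)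
    ultimately show ?thesis by linarith
  qed
  hence "g * h \<in> conv_fps K OK" using h(3) by (intro bounded_in_conv_fps) auto
  thus ?thesis using h(1,2) by (auto simp: fps_over_def)
qed

text \<open>Case \<open>D = OK[1/a]{t}\<close>: choose the corrections close to \<open>s\<close> itself, so that \<open>h\<close> has bounded
  coefficients; then \<open>g h\<close> is a product of two series of subexponential growth.\<close>

lemma multiplier_conv_fps:
  assumes g: "g \<in> conv_fps K OKa" "g \<noteq> 0"
  shows "\<exists>h\<in>conv_fps K OKa. h \<noteq> 0 \<and> g * h \<in> conv_fps K OK"
proof -
  have g_OKa: "fps_nth g n \<in> OKa" for n using g by (simp add: conv_fps_iff)
  define b where "b = fps_nth g (subdegree g)"
  have b: "b \<in> OKa" "b \<noteq> 0" using g g_OKa by (auto simp: b_def)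
  obtain C where C: "C \<ge> 0"
    "\<forall>s\<in>OKa. \<forall>w\<in>K. \<exists>c\<in>OK. (c - s) / b \<in> OKa \<and> (\<forall>\<sigma>\<in>embeddings K. cmod (\<sigma> (c - w)) \<le> C)"
    using correction[OF b] by blast
  define cf where
    "cf = (\<lambda>s. SOME c. c \<in> OK \<and> (c - s) / b \<in> OKa \<and> (\<forall>\<sigma>\<in>embeddings K. cmod (\<sigma> (c - s)) \<le> C))"
  have cf: "cf s \<in> OK \<and> (cf s - s) / b \<in> OKa \<and> (\<forall>\<sigma>\<in>embeddings K. cmod (\<sigma> (cf s - s)) \<le> C)"
    if "s \<in> OKa" for s
  proof -
    have "\<exists>c. c \<in> OK \<and> (c - s) / b \<in> OKa \<and> (\<forall>\<sigma>\<in>embeddings K. cmod (\<sigma> (c - s)) \<le> C)"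
      using C(2) that OKa_in_K by blast
    thus ?thesis unfolding cf_def by (rule someI_ex)
  qed
  have "\<exists>h. h \<noteq> 0 \<and> (\<forall>n. fps_nth h n \<in> OKa) \<and> (\<forall>n. fps_nth (g * h) n \<in> OK) \<and>
    (\<forall>n>0. \<exists>s\<in>OKa. fps_nth (g * h) (subdegree g + n) = cf s \<and> fps_nth h n = (cf s - s) / b)"
    unfolding b_def by (rule multiplier_from_corrections) (use g_OKa g(2) cf in \<open>auto simp: b_def\<close>)
  then obtain h where h: "h \<noteq> 0" "\<forall>n. fps_nth h n \<in> OKa" "\<forall>n. fps_nth (g * h) n \<in> OK"
    "\<forall>n>0. \<exists>s\<in>OKa. fps_nth (g * h) (subdegree g + n) = cf s \<and> fps_nth h n = (cf s - s) / b"
    by (elim exE conjE) (rule that)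
  have "house K (fps_nth h n) \<le> house K (fps_nth h 0) + C * house K (inverse b)" for n
  proof (cases "n = 0")
    case False
    then obtain s where s: "s \<in> OKa" "fps_nth h n = (cf s - s) * inverse b"
      using h(4) by (auto simp: divide_inverse)
    have "house K (cf s - s) \<le> C" using cf[OF s(1)] by (intro house_le) auto
    hence "house K (fps_nth h n) \<le> C * house K (inverse b)"
      using s cf[OF s(1)] b house_mult[of "cf s - s" "inverse b"] house_nonneg[of "inverse b"]
      by (simp add: OKa_in_K OK_in_K mult_right_mono order_trans)
    thus ?thesis using house_nonneg[of "fps_nth h 0"] by linarith
  qed (use house_nonneg C(1) in \<open>simp add: mult_nonneg_nonneg\<close>)
  hence h_conv: "h \<in> conv_fps K OKa" using h(2) by (intro bounded_in_conv_fps) auto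
  have "subexp (\<lambda>n. house K (fps_nth (g * h) n))"
    using g(1) h_conv g_OKa h(2) by (intro subexp_house_mult) (auto simp: conv_fps_iff OKa_in_K)
  hence "g * h \<in> conv_fps K OK" using h(3) by (simp add: conv_fps_iff)
  thus ?thesis using h(1) h_conv by blast
qed

end

lemma (in num_field) one_in_series_rings:
  assumes "0 \<in> S" "1 \<in> S"
  shows "1 \<in> conv_fps K S" "1 \<in> fps_over S"
proof -
  have "house K (fps_nth 1 n) \<le> 1" for n
  proof (rule house_le)
    fix \<sigma> assume "\<sigma> \<in> embeddings K"
    thus "cmod (\<sigma> (fps_nth 1 n)) \<le> 1" by (cases "n = 0") (simp_all add: emb_one emb_zero)
  qed
  thus "1 \<in> conv_fps K S" using assms by (intro bounded_in_conv_fps[of _ _ 1]) auto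
  show "1 \<in> fps_over S" using assms by (auto simp: fps_over_def)
qed

theorem corollary2p9:
  fixes K :: "complex set" and a :: complex and D :: "complex fps set"
  assumes "number_field K"
    and "a \<in> ring_of_integers K" and "a \<noteq> 0"
    and "D = conv_fps K (invert_elem (ring_of_integers K) a)
         \<or> D = fps_over (invert_elem (ring_of_integers K) a)"
  shows "\<forall>g\<in>D. \<exists>h\<in>D. h \<noteq> 0 \<and> g * h \<in> conv_fps K (ring_of_integers K)"
proof
  interpret num_field_loc K a
    using assms(1-3) by unfold_locales
  fix g assume g: "g \<in> D"
  show "\<exists>h\<in>D. h \<noteq> 0 \<and> g * h \<in> conv_fps K OK"
  proof (cases "g = 0")
    case True
    have "1 \<in> D" using assms(4) one_in_series_rings[of OKa] by auto
    moreover have "g * 1 \<in> conv_fps K OK"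
      using True by (intro bounded_in_conv_fps[of _ _ 0]) (simp_all add: house_zero)
    ultimately show ?thesis by (intro bexI[of _ 1]) auto
  next
    case False
    with g assms(4) show ?thesis
      using multiplier_conv_fps[of g] multiplier_fps_over[of g] by (elim disjE) simp_all
  qed
qed

end
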